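(* Fix a uniformity $r\ge2$ and a residue $k$ modulo $r$. Let $\mathrm{cyc}=(1\,2\,\cdots\,r)\in S_r$ and $\pi=\mathrm{cyc}^k$. An $r$-graph $G$ is $\mathscr C_k^{(r)}$-hom-free if and only if there is an accordant $A_\pi$-coloring $\chi:\vec E(G)\to A_\pi$.
   Context: An $r$-graph is an $r$-uniform hypergraph. For $\ell>r$, the tight cycle $C_\ell^{(r)}$ has vertices $v_1,\dots,v_\ell$ and edges $\{v_i,\dots,v_{i+r-1}\}$, $1\le i\le \ell$, indices mod $\ell$. A homomorphism $F\to G$ is a map $\phi:V(F)\to V(G)$ sending each edge of $F$ onto an edge of $G$ (images of an edge's vertices are distinct). $G$ is $\mathscr C_k^{(r)}$-hom-free if there is no homomorphism $C_\ell^{(r)}\to G$ for any $\ell>r$ with $\ell\equiv k\pmod r$. An oriented edge of $G$ is an ordered $r$-tuple $x_1\cdots x_r$ of vertices whose underlying set $\{x_1,\dots,x_r\}$ is an edge of $G$; $\vec E(G)$ is the set of oriented edges, with $S_r$-action $\sigma(x_1\cdots x_r)=x_{\sigma^{-1}(1)}\cdots x_{\sigma^{-1}(r)}$. For an $S_r$-set $A$, an $A$-coloring of $\vec E(G)$ is an $S_r$-equivariant map $\chi:\vec E(G)\to A$ (i.e. $\chi(\sigma(\mathbf x))=\sigma(\chi(\mathbf x))$); it is accordant if $\chi(\mathbf x)=\chi(\mathbf x')$ whenever $\mathbf x,\mathbf x'\in\vec E(G)$ differ in exactly one coordinate. A subgroup of $S_r$ avoids $\pi$ if it contains no conjugate of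 $\pi$. Let $\mathfrak G_\pi$ be the set of maximal $\pi$-avoiding subgroups of $S_r$, and write $\mathfrak G_\pi$ as the disjoint union of the conjugacy classes of subgroups $\Gamma_1,\dots,\Gamma_m$. Then $A_\pi=\bigsqcup_{i=1}^m S_r/\Gamma_i$, the disjoint union of the sets of left cosets, with $S_r$ acting by left multiplication. *)

theory Defs
  imports "HOL-Algebra.Sym_Groups" "HOL-Algebra.Coset"
begin

type_synonym perm = "nat \<Rightarrow> nat"

definition cyc :: "nat \<Rightarrow> perm" where
  "cyc r i = (if 1 \<le> i \<and> i < r then i + 1 else if i = r then 1 else i)"

text \<open>Tight cycle homomorphisms: phi maps vertex i (0..l-1) of C_l; edge i is {i,...,i+r-1} mod l.\<close>
definition cycle_hom :: "nat \<Rightarrow> 'a set set \<Rightarrow> nat \<Rightarrow> (nat \<Rightarrow> 'a) \<Rightarrow> bool" where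
  "cycle_hom r E l phi \<longleftrightarrow>
     (\<forall>i<l. distinct (map (\<lambda>j. phi ((i + j) mod l)) [0..<r])
            \<and> set (map (\<lambda>j. phi ((i + j) mod l)) [0..<r]) \<in> E)"

definition hom_free :: "nat \<Rightarrow> nat \<Rightarrow> 'a set set \<Rightarrow> bool" where
  "hom_free r k E \<longleftrightarrow> \<not> (\<exists>l phi. l > r \<and> l mod r = k mod r \<and> cycle_hom r E l phi)"

definition avoids :: "nat \<Rightarrow> perm \<Rightarrow> perm set \<Rightarrow> bool" where
  "avoids r p H \<longleftrightarrow>
     (\<forall>g \<in> carrier (sym_group r). g \<otimes>\<^bsub>sym_group r\<^esub> p \<otimes>\<^bsub>sym_group r\<^esub> inv\<^bsub>sym_group r\<^esub> g \<notin> H)"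

definition max_avoiding :: "nat \<Rightarrow> perm \<Rightarrow> perm set \<Rightarrow> bool" where
  "max_avoiding r p H \<longleftrightarrow> subgroup H (sym_group r) \<and> avoids r p H \<and>
     (\<forall>H'. subgroup H' (sym_group r) \<and> avoids r p H' \<and> H \<subseteq> H' \<longrightarrow> H' = H)"

definition conj_subgroups :: "nat \<Rightarrow> perm set \<Rightarrow> perm set \<Rightarrow> bool" where
  "conj_subgroups r H H' \<longleftrightarrow> (\<exists>g \<in> carrier (sym_group r).
     H' = (g <#\<^bsub>sym_group r\<^esub> H) #>\<^bsub>sym_group r\<^esub> inv\<^bsub>sym_group r\<^esub> g)"

definition rep_system :: "nat \<Rightarrow> perm \<Rightarrow> perm set set \<Rightarrow> bool" where
  "rep_system r p R \<longleftrightarrow> R \<subseteq> {H. max_avoiding r p H} \<and>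
     (\<forall>H. max_avoiding r p H \<longrightarrow> (\<exists>!G. G \<in> R \<and> conj_subgroups r G H))"

text \<open>A_p = disjoint union over Gamma in R of the left cosets S_r/Gamma; element = (Gamma, coset).\<close>
definition A_set :: "nat \<Rightarrow> perm set set \<Rightarrow> (perm set \<times> perm set) set" where
  "A_set r R = {(G, C). G \<in> R \<and> (\<exists>g \<in> carrier (sym_group r). C = g <#\<^bsub>sym_group r\<^esub> G)}"

definition A_act :: "nat \<Rightarrow> perm \<Rightarrow> perm set \<times> perm set \<Rightarrow> perm set \<times> perm set" where
  "A_act r s a = (fst a, s <#\<^bsub>sym_group r\<^esub> snd a)"

text \<open>Oriented edges: lists x_1...x_r (stored 0-indexed) of distinct vertices forming an edge.\<close>
definition oedges :: "nat \<Rightarrow> 'a set set \<Rightarrow> 'a list set" where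
  "oedges r E = {xs. length xs = r \<and> distinct xs \<and> set xs \<in> E}"

text \<open>sigma(x_1...x_r) = x_{sigma^-1(1)} ... x_{sigma^-1(r)}\<close>
definition tuple_act :: "nat \<Rightarrow> perm \<Rightarrow> 'a list \<Rightarrow> 'a list" where
  "tuple_act r s xs = map (\<lambda>j. xs ! (inv' s (Suc j) - 1)) [0..<r]"

definition A_coloring :: "nat \<Rightarrow> perm set set \<Rightarrow> 'a set set \<Rightarrow> ('a list \<Rightarrow> perm set \<times> perm set) \<Rightarrow> bool" where
  "A_coloring r R E chi \<longleftrightarrow>
     (\<forall>xs \<in> oedges r E. chi xs \<in> A_set r R) \<and>
     (\<forall>s \<in> carrier (sym_group r). \<forall>xs \<in> oedges r E. chi (tuple_act r s xs) = A_act r s (chi xs))"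

definition accordant :: "nat \<Rightarrow> 'a set set \<Rightarrow> ('a list \<Rightarrow> 'b) \<Rightarrow> bool" where
  "accordant r E chi \<longleftrightarrow> (\<forall>xs \<in> oedges r E. \<forall>ys \<in> oedges r E.
     card {i. i < r \<and> xs ! i \<noteq> ys ! i} = 1 \<longrightarrow> chi xs = chi ys)"

end

theory Submission
  imports Defs
begin

text \<open>Call two oriented edges equivalent if they are joined by a chain of oriented edges in
which consecutive ones differ in exactly one coordinate; accordant colorings are exactly the
colorings that are constant on equivalence classes. Sliding a window of width r along a tight
walk shows that a walk of length m starting at x ends in the class of x rotated by m, while a
change in a single coordinate is realised by a walk of length r. Since \<pi> = cyc^k acts on
tuples as the rotation by -k, G admits a homomorphic image of a tight cycle of length
congruent to k iff some oriented edge z is equivalent to \<pi> z.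

S_r permutes the classes, and the stabilizer of the class of x is
\<Gamma>(x) = {\<sigma>. \<sigma> x ~ x}, so G is hom-free iff every \<Gamma>(x) avoids \<pi>. Extend
\<Gamma>(x) to a maximal \<pi>-avoiding subgroup g \<Gamma>_i g\<inverse> and, choosing a representative x in
each orbit of classes, colour \<sigma> x and its whole class by the coset \<sigma> g \<Gamma>_i; this is well
defined precisely because \<Gamma>(x) is contained in g \<Gamma>_i g\<inverse>. Conversely, if \<pi> z ~ z then
an accordant coloring assigns to z a coset \<sigma> \<Gamma>_i fixed by \<pi>, so that the conjugate
\<sigma>\<inverse> \<pi> \<sigma> lies in \<Gamma>_i.\<close>

section \<open>Permuting and rotating oriented edges\<close>

definition reindex :: "nat \<Rightarrow> (nat \<Rightarrow> nat) \<Rightarrow> 'a list \<Rightarrow> 'a list" where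
  "reindex r b xs = map (\<lambda>j. xs ! b j) [0..<r]"

definition adjacent :: "nat \<Rightarrow> 'a set set \<Rightarrow> 'a list \<Rightarrow> 'a list \<Rightarrow> bool" where
  "adjacent r E xs ys \<longleftrightarrow>
     xs \<in> oedges r E \<and> ys \<in> oedges r E \<and> card {i. i < r \<and> xs ! i \<noteq> ys ! i} = 1"

lemma oedges_length: "xs \<in> oedges r E \<Longrightarrow> length xs = r"
  by (simp add: oedges_def)

lemma rotate_in_oedges: "xs \<in> oedges r E \<Longrightarrow> rotate m xs \<in> oedges r E"
  by (simp add: oedges_def)

lemma reindex_in_oedges:
  assumes b: "bij_betw b {..<r} {..<r}" and xs: "xs \<in> oedges r E"
  shows "reindex r b xs \<in> oedges r E"
proof -
  have len: "length xs = r" and "distinct xs" using xs by (auto simp: oedges_def)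
  then have "inj_on ((!) xs \<circ> b) {..<r}"
    using b inj_on_nth[of xs] by (intro comp_inj_on) (auto simp: bij_betw_def)
  moreover have "set (reindex r b xs) = (!) xs ` b ` {..<r}"
    by (simp add: reindex_def image_image atLeast0LessThan)
  moreover have "(!) xs ` {..<length xs} = set xs"
    by (auto simp: set_conv_nth)
  ultimately show ?thesis
    using xs b len by (simp add: oedges_def reindex_def distinct_map atLeast0LessThan comp_def bij_betw_def)
qed

lemma reindex_adjacent:
  assumes b: "bij_betw b {..<r} {..<r}" and "adjacent r E xs ys"
  shows "adjacent r E (reindex r b xs) (reindex r b ys)"
proof -
  let ?D = "\<lambda>xs ys. {i. i < r \<and> xs ! i \<noteq> ys ! i}"
  have "?D (reindex r b xs) (reindex r b ys) = {i \<in> {..<r}. xs ! b i \<noteq> ys ! b i}"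
    by (auto simp: reindex_def)
  moreover have "b ` {i \<in> {..<r}. xs ! b i \<noteq> ys ! b i} = {j \<in> b ` {..<r}. xs ! j \<noteq> ys ! j}"
    by blast
  ultimately have "bij_betw b (?D (reindex r b xs) (reindex r b ys)) (?D xs ys)"
    using b by (intro bij_betw_subset[OF b]) (auto simp: bij_betw_def)
  then have "card (?D (reindex r b xs) (reindex r b ys)) = card (?D xs ys)"
    by (rule bij_betw_same_card)
  with assms show ?thesis by (simp add: adjacent_def reindex_in_oedges)
qed

lemma reindex_rtranclp_adjacent:
  assumes "bij_betw b {..<r} {..<r}" and "(adjacent r E)\<^sup>*\<^sup>* xs ys"
  shows "(adjacent r E)\<^sup>*\<^sup>* (reindex r b xs) (reindex r b ys)"
  using assms(2) by induction (auto intro: rtranclp.rtrancl_into_rtrancl reindex_adjacent[OF assms(1)])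

lemma symp_adjacent: "symp (adjacent r E)"
  by (auto simp: symp_def adjacent_def eq_commute)

lemma rtranclp_adjacent_sym:
  "(adjacent r E)\<^sup>*\<^sup>* xs ys \<Longrightarrow> (adjacent r E)\<^sup>*\<^sup>* ys xs"
  using symp_rtranclp[OF symp_adjacent] by (blast dest: sympD)

lemma bij_betw_tuple_act_index:
  assumes "s \<in> carrier (sym_group r)"
  shows "bij_betw (\<lambda>j. inv' s (Suc j) - 1) {..<r} {..<r}"
proof -
  have "bij_betw Suc {..<r} {1..r}"
    by (simp add: image_Suc_lessThan)
  moreover have "bij_betw (inv' s) {1..r} {1..r}"
    using assms by (simp add: sym_group_carrier permutes_imp_bij permutes_inv)
  moreover have "bij_betw (\<lambda>i. i - 1) {1..r} {..<r}"
    by (rule bij_betw_byWitness[where f' = Suc]) auto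
  ultimately have "bij_betw ((\<lambda>i. i - 1) \<circ> inv' s \<circ> Suc) {..<r} {..<r}"
    by (intro bij_betw_trans)
  then show ?thesis by (simp add: comp_def)
qed

lemma tuple_act_eq_reindex: "tuple_act r s xs = reindex r (\<lambda>j. inv' s (Suc j) - 1) xs"
  by (simp add: tuple_act_def reindex_def)

lemma tuple_act_in_oedges:
  "s \<in> carrier (sym_group r) \<Longrightarrow> xs \<in> oedges r E \<Longrightarrow> tuple_act r s xs \<in> oedges r E"
  unfolding tuple_act_eq_reindex by (rule reindex_in_oedges[OF bij_betw_tuple_act_index])

lemma tuple_act_rtranclp_adjacent:
  "s \<in> carrier (sym_group r) \<Longrightarrow> (adjacent r E)\<^sup>*\<^sup>* xs ys \<Longrightarrow>
    (adjacent r E)\<^sup>*\<^sup>* (tuple_act r s xs) (tuple_act r s ys)"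
  unfolding tuple_act_eq_reindex by (rule reindex_rtranclp_adjacent[OF bij_betw_tuple_act_index])

lemma tuple_act_one: "length xs = r \<Longrightarrow> tuple_act r \<one>\<^bsub>sym_group r\<^esub> xs = xs"
  using map_nth[of xs] by (simp add: tuple_act_def sym_group_one)

lemma tuple_act_mult:
  assumes s: "s \<in> carrier (sym_group r)" and t: "t \<in> carrier (sym_group r)"
  shows "tuple_act r s (tuple_act r t xs) = tuple_act r (s \<otimes>\<^bsub>sym_group r\<^esub> t) xs"
proof (rule nth_equalityI)
  fix j assume "j < length (tuple_act r s (tuple_act r t xs))"
  then have j: "j < r" by (simp add: tuple_act_def)
  have "s permutes {1..r}" using s by (simp add: sym_group_carrier)
  from permutes_in_image[OF permutes_inv[OF this]] have "inv' s (Suc j) \<in> {1..r}"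
    using j by simp
  then have "inv' s (Suc j) - 1 < r" and "Suc (inv' s (Suc j) - 1) = inv' s (Suc j)"
    by auto
  moreover have "inv' (s \<circ> t) = inv' t \<circ> inv' s"
    using s t by (simp add: sym_group_carrier o_inv_distrib permutes_bij)
  ultimately show "tuple_act r s (tuple_act r t xs) ! j = tuple_act r (s \<otimes>\<^bsub>sym_group r\<^esub> t) xs ! j"
    using j by (simp add: tuple_act_def sym_group_mult)
qed (simp add: tuple_act_def)

lemma tuple_act_inv_cancel:
  assumes "s \<in> carrier (sym_group r)" and "length xs = r"
  shows "tuple_act r (inv\<^bsub>sym_group r\<^esub> s) (tuple_act r s xs) = xs"
proof -
  have "inv\<^bsub>sym_group r\<^esub> s \<in> carrier (sym_group r)"
    using group.inv_closed[OF sym_group_is_group assms(1)] .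
  then have "tuple_act r (inv\<^bsub>sym_group r\<^esub> s) (tuple_act r s xs)
      = tuple_act r (inv\<^bsub>sym_group r\<^esub> s \<otimes>\<^bsub>sym_group r\<^esub> s) xs"
    using assms(1) by (rule tuple_act_mult)
  also have "\<dots> = xs"
    using group.l_inv[OF sym_group_is_group assms(1)] tuple_act_one[OF assms(2)] by simp
  finally show ?thesis .
qed

lemma cyc_permutes:
  assumes "0 < r" shows "cyc r permutes {1..r}"
proof -
  have inj: "inj_on (cyc r) {1..r}" by (auto simp: inj_on_def cyc_def split: if_splits)
  moreover have "cyc r ` {1..r} \<subseteq> {1..r}" by (auto simp: cyc_def)
  ultimately have "bij_betw (cyc r) {1..r} {1..r}"
    by (simp add: bij_betw_def endo_inj_surj)
  then show ?thesis by (rule bij_imp_permutes) (use assms in \<open>auto simp: cyc_def\<close>)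
qed

lemma cyc_pow_permutes:
  assumes "0 < r" shows "(cyc r ^^ k) permutes {1..r}"
proof (induction k)
  case (Suc k)
  then show ?case unfolding funpow.simps(2) by (rule permutes_compose[OF _ cyc_permutes[OF assms]])
qed (unfold funpow.simps(1), rule permutes_id)

lemma cyc_pow_in_carrier: "0 < r \<Longrightarrow> cyc r ^^ k \<in> carrier (sym_group r)"
  using cyc_pow_permutes[of r k] by (simp add: sym_group_carrier)

lemma cyc_pow_Suc:
  assumes "j < r" shows "(cyc r ^^ k) (Suc j) = Suc ((j + k) mod r)"
proof (induction k)
  case (Suc k)
  have "(j + k) mod r < r" using assms by simp
  with Suc show ?case by (auto simp: cyc_def mod_Suc)
qed (use assms in simp)

lemma mod_add_complement: "0 < r \<Longrightarrow> (k + (r - k mod r)) mod r = (0::nat)"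
  by (metis le_add_diff_inverse mod_add_cong mod_le_divisor mod_mod_trivial mod_self)

lemma tuple_act_cyc_pow:
  assumes "0 < r" and len: "length xs = r"
  shows "tuple_act r (cyc r ^^ k) xs = rotate (r - k mod r) xs"
proof (rule nth_equalityI)
  fix j assume "j < length (tuple_act r (cyc r ^^ k) xs)"
  then have j: "j < r" by (simp add: tuple_act_def)
  define i where "i = (r - k mod r + j) mod r"
  have i: "i < r" using j by (simp add: i_def)
  have "(i + k) mod r = (r - k mod r + j + k) mod r"
    by (simp add: i_def mod_add_left_eq)
  also have "\<dots> = (j + (k + (r - k mod r))) mod r"
    by (simp add: ac_simps)
  also have "\<dots> = j"
    by (simp only: mod_add_right_eq[of j "k + (r - k mod r)" r, symmetric]
        mod_add_complement[OF assms(1)] add_0_right mod_less[OF j])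
  finally have "(cyc r ^^ k) (Suc i) = Suc j" using cyc_pow_Suc[OF i] by simp
  then have "inv' (cyc r ^^ k) (Suc j) = Suc i"
    using permutes_inverses(2)[OF cyc_pow_permutes[OF assms(1)]] by metis
  then show "tuple_act r (cyc r ^^ k) xs ! j = rotate (r - k mod r) xs ! j"
    using j len by (simp add: tuple_act_def nth_rotate i_def)
qed (simp add: tuple_act_def len)

lemma rotate_tuple_act_cyc_pow:
  assumes "0 < r" and "length xs = r"
  shows "rotate k (tuple_act r (cyc r ^^ k) xs) = xs"
proof -
  have "rotate k (tuple_act r (cyc r ^^ k) xs) = rotate (k + (r - k mod r)) xs"
    by (simp only: tuple_act_cyc_pow[OF assms] rotate_rotate)
  also have "\<dots> = xs"
    using mod_add_complement[OF assms(1), of k] assms(2) by (intro rotate_id) simp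
  finally show ?thesis .
qed

lemma tuple_act_cyc_pow_rotate:
  assumes "0 < r" and "length xs = r"
  shows "tuple_act r (cyc r ^^ k) (rotate k xs) = xs"
proof -
  have "tuple_act r (cyc r ^^ k) (rotate k xs) = rotate (k + (r - k mod r)) xs"
    using tuple_act_cyc_pow[OF assms(1), of "rotate k xs"] assms(2)
    by (simp only: length_rotate rotate_rotate add.commute)
  also have "\<dots> = xs"
    using mod_add_complement[OF assms(1), of k] assms(2) by (intro rotate_id) simp
  finally show ?thesis .
qed

lemma rotate_eq_tuple_act_cyc_pow:
  assumes "0 < r" and "length xs = r"
  shows "rotate m xs = tuple_act r (cyc r ^^ (r - m mod r)) xs"
proof -
  have "(r - (r - m mod r) mod r) mod r = m mod r"
  proof (cases "m mod r = 0")
    case False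
    with assms(1) have "(r - m mod r) mod r = r - m mod r" by simp
    with assms(1) show ?thesis by (simp add: le_less)
  qed simp
  then have "rotate ((r - (r - m mod r) mod r) mod length xs) xs = rotate (m mod length xs) xs"
    using assms(2) by simp
  then have "rotate (r - (r - m mod r) mod r) xs = rotate m xs"
    by (simp only: rotate_conv_mod[symmetric])
  then show ?thesis
    by (simp only: tuple_act_cyc_pow[OF assms])
qed

lemma rotate_rtranclp_adjacent:
  assumes "0 < r" and "length xs = r" and "length ys = r"
    and "(adjacent r E)\<^sup>*\<^sup>* xs ys"
  shows "(adjacent r E)\<^sup>*\<^sup>* (rotate m xs) (rotate m ys)"
  unfolding rotate_eq_tuple_act_cyc_pow[OF assms(1,2)] rotate_eq_tuple_act_cyc_pow[OF assms(1,3)]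
  by (rule tuple_act_rtranclp_adjacent[OF cyc_pow_in_carrier[OF assms(1)] assms(4)])

section \<open>Tight walks\<close>

definition window :: "nat \<Rightarrow> (nat \<Rightarrow> 'a) \<Rightarrow> nat \<Rightarrow> 'a list" where
  "window r f i = map (\<lambda>j. f (i + j)) [0..<r]"

definition tight_walk :: "nat \<Rightarrow> 'a set set \<Rightarrow> nat \<Rightarrow> 'a list \<Rightarrow> 'a list \<Rightarrow> bool" where
  "tight_walk r E m xs ys \<longleftrightarrow>
     (\<exists>f. (\<forall>i\<le>m. window r f i \<in> oedges r E) \<and> window r f 0 = xs \<and> window r f m = ys)"

lemma length_window [simp]: "length (window r f i) = r"
  by (simp add: window_def)

lemma nth_window [simp]: "j < r \<Longrightarrow> window r f i ! j = f (i + j)"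
  by (simp add: window_def)

lemma window_cyclic: "length xs = r \<Longrightarrow> window r (\<lambda>t. xs ! (t mod r)) i = rotate i xs"
  by (intro nth_equalityI) (simp_all add: nth_rotate)

lemma tight_walk_rotate:
  assumes "xs \<in> oedges r E" shows "tight_walk r E m xs (rotate m xs)"
proof -
  have "window r (\<lambda>t. xs ! (t mod r)) i = rotate i xs" for i
    by (rule window_cyclic[OF oedges_length[OF assms]])
  then show ?thesis
    unfolding tight_walk_def using assms
    by (intro exI[of _ "\<lambda>t. xs ! (t mod r)"]) (simp add: rotate_in_oedges)
qed

lemma tight_walk_trans:
  assumes "tight_walk r E a xs ys" and "tight_walk r E b ys zs"
  shows "tight_walk r E (a + b) xs zs"
proof -
  obtain f where f: "\<forall>i\<le>a. window r f i \<in> oedges r E" "window r f 0 = xs" "window r f a = ys"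
    using assms(1) by (auto simp: tight_walk_def)
  obtain g where g: "\<forall>i\<le>b. window r g i \<in> oedges r E" "window r g 0 = ys" "window r g b = zs"
    using assms(2) by (auto simp: tight_walk_def)
  define h where "h t = (if t < a then f t else g (t - a))" for t
  have "h t = f t" if "t < a + r" for t
  proof (cases "t < a")
    case False
    then have "t - a < r" using that by simp
    then have "g (t - a) = window r g 0 ! (t - a)" by simp
    also have "\<dots> = f t" using \<open>t - a < r\<close> False f(3) g(2) by (metis nth_window le_add_diff_inverse not_less)
    finally show ?thesis using False by (simp add: h_def)
  qed (simp add: h_def)
  then have hf: "window r h i = window r f i" if "i \<le> a" for i
    using that by (intro nth_equalityI) simp_all
  have hg: "window r h i = window r g (i - a)" if "a \<le> i" for i
    using that by (intro nth_equalityI) (simp_all add: h_def)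
  have "window r h i \<in> oedges r E" if "i \<le> a + b" for i
  proof (cases "i \<le> a")
    case True
    then show ?thesis using f(1) hf by simp
  next
    case False
    then show ?thesis using that g(1) hg[of i] by simp
  qed
  moreover have "window r h 0 = xs" and "window r h (a + b) = zs"
    using f(2) g(3) hf[of 0] hg[of "a + b"] by simp_all
  ultimately show ?thesis
    unfolding tight_walk_def by blast
qed

lemma adjacent_imp_tight_walk:
  assumes "adjacent r E xs ys" shows "tight_walk r E r xs ys"
proof -
  have xs: "xs \<in> oedges r E" and ys: "ys \<in> oedges r E"
    and "card {i. i < r \<and> xs ! i \<noteq> ys ! i} = 1"
    using assms by (auto simp: adjacent_def)
  then obtain p where p: "{i. i < r \<and> xs ! i \<noteq> ys ! i} = {p}"
    using card_1_singletonE by blast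
  then have "p < r" and same: "\<And>i. i < r \<Longrightarrow> i \<noteq> p \<Longrightarrow> xs ! i = ys ! i"
    by auto
  have len: "length xs = r" "length ys = r" using xs ys by (simp_all add: oedges_length)
  \<comment> \<open>Shift out xs one vertex at a time while shifting in ys; up to the
      position p the window is a rotation of xs, afterwards one of ys.\<close>
  define f where "f t = (if t < r then xs ! t else ys ! (t - r))" for t
  have f_mod: "f (t + j) = (if t + j < r then xs ! ((t + j) mod r) else ys ! ((t + j) mod r))"
    if "t \<le> r" "j < r" for t j
    using that by (simp add: f_def mod_if)
  have "window r f t = rotate t xs" if "t \<le> p" for t
  proof (intro nth_equalityI)
    fix j assume "j < length (window r f t)"
    then have "j < r" by simp
    moreover have "(t + j) mod r \<noteq> p" if "\<not> t + j < r"
      using that \<open>j < r\<close> \<open>t \<le> p\<close> \<open>p < r\<close> by (simp add: mod_if, arith)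
    ultimately show "window r f t ! j = rotate t xs ! j"
      using f_mod[of t j] same[of "(t + j) mod r"] \<open>t \<le> p\<close> \<open>p < r\<close> len
      by (simp add: nth_rotate split: if_splits)
  qed (simp add: len)
  moreover have "window r f t = rotate t ys" if "p < t" "t \<le> r" for t
  proof (intro nth_equalityI)
    fix j assume "j < length (window r f t)"
    then have "j < r" by simp
    moreover have "(t + j) mod r \<noteq> p" if "t + j < r"
      using that \<open>p < t\<close> by simp
    ultimately show "window r f t ! j = rotate t ys ! j"
      using f_mod[of t j] same[of "(t + j) mod r"] \<open>t \<le> r\<close> len
      by (simp add: nth_rotate split: if_splits)
  qed (simp add: len)
  ultimately have "window r f t \<in> oedges r E" if "t \<le> r" for t
    using that xs ys by (cases "t \<le> p") (auto intro: rotate_in_oedges)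
  moreover have "window r f 0 = xs" "window r f r = ys"
    using len by (auto intro!: nth_equalityI simp: f_def)
  ultimately show ?thesis unfolding tight_walk_def by blast
qed

lemma rtranclp_imp_tight_walk:
  assumes "(adjacent r E)\<^sup>*\<^sup>* xs ys" and "xs \<in> oedges r E"
  shows "\<exists>q. tight_walk r E (q * r) xs ys"
  using assms(1)
proof induction
  case base
  show ?case using tight_walk_rotate[OF assms(2), of 0] by (intro exI[of _ 0]) simp
next
  case (step ys zs)
  then obtain q where "tight_walk r E (q * r) xs ys" by blast
  from tight_walk_trans[OF this adjacent_imp_tight_walk[OF step(2)]]
  have "tight_walk r E (Suc q * r) xs zs" by (simp add: add.commute)
  then show ?case ..
qed

lemma rtranclp_adjacent_if_differ_only_at:
  assumes "xs \<in> oedges r E" and "ys \<in> oedges r E"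
    and "{i. i < r \<and> xs ! i \<noteq> ys ! i} \<subseteq> {p}"
  shows "(adjacent r E)\<^sup>*\<^sup>* xs ys"
proof (cases "{i. i < r \<and> xs ! i \<noteq> ys ! i} = {}")
  case True
  then have "xs = ys"
    using assms(1,2) by (intro nth_equalityI) (auto simp: oedges_length)
  then show ?thesis by simp
next
  case False
  with assms(3) have "{i. i < r \<and> xs ! i \<noteq> ys ! i} = {p}" by blast
  with assms(1,2) have "adjacent r E xs ys" by (simp add: adjacent_def)
  then show ?thesis by simp
qed

lemma tight_walk_imp_rtranclp:
  assumes r: "0 < r" and "tight_walk r E m xs ys"
  shows "(adjacent r E)\<^sup>*\<^sup>* ys (rotate m xs)"
proof -
  obtain f where f: "\<forall>i\<le>m. window r f i \<in> oedges r E" "window r f 0 = xs" "window r f m = ys"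
    using assms(2) by (auto simp: tight_walk_def)
  have "(adjacent r E)\<^sup>*\<^sup>* (window r f i) (rotate i xs)" if "i \<le> m" for i
    using that
  proof (induction i)
    case 0
    then show ?case using f(2) by simp
  next
    case (Suc i)
    let ?u = "window r f (Suc i)" and ?v = "rotate 1 (window r f i)"
    have u: "?u \<in> oedges r E" using f(1) Suc.prems by simp
    have v: "?v \<in> oedges r E" by (rule rotate_in_oedges) (use f(1) Suc.prems in simp)
    \<comment> \<open>Advancing the window by one step changes only its last entry.\<close>
    have same: "?u ! j = ?v ! j" if "j < r - 1" for j
      using that by (simp add: nth_rotate1)
    have "{j. j < r \<and> ?u ! j \<noteq> ?v ! j} \<subseteq> {r - 1}"
    proof
      fix j assume "j \<in> {j. j < r \<and> ?u ! j \<noteq> ?v ! j}"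
      with same have "j < r" "\<not> j < r - 1" by blast+
      then show "j \<in> {r - 1}" by simp
    qed
    then have "(adjacent r E)\<^sup>*\<^sup>* ?u ?v"
      by (rule rtranclp_adjacent_if_differ_only_at[OF u v])
    also have "(adjacent r E)\<^sup>*\<^sup>* ?v (rotate 1 (rotate i xs))"
      using Suc f(2) by (intro rotate_rtranclp_adjacent[OF r]) auto
    finally show ?case by simp
  qed
  then show ?thesis using f(3) by blast
qed

lemma ex_cycle_hom_iff_closed_tight_walk:
  assumes "r < l"
  shows "(\<exists>phi. cycle_hom r E l phi) \<longleftrightarrow> (\<exists>xs. tight_walk r E l xs xs)"
proof
  assume "\<exists>phi. cycle_hom r E l phi"
  then obtain phi where phi: "cycle_hom r E l phi" ..
  define f where "f t = phi (t mod l)" for t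
  have "window r f i = map (\<lambda>j. phi ((i mod l + j) mod l)) [0..<r]" for i
    by (intro nth_equalityI) (simp_all add: f_def mod_add_left_eq)
  then have "window r f i \<in> oedges r E" for i
    using phi assms by (simp add: cycle_hom_def oedges_def)
  moreover have "window r f l = window r f 0"
    by (intro nth_equalityI) (simp_all add: f_def)
  ultimately show "\<exists>xs. tight_walk r E l xs xs"
    unfolding tight_walk_def by metis
next
  assume "\<exists>xs. tight_walk r E l xs xs"
  then obtain f where f: "\<forall>i\<le>l. window r f i \<in> oedges r E" "window r f l = window r f 0"
    unfolding tight_walk_def by metis
  have periodic: "f (l + j) = f j" if "j < r" for j
    using f(2) nth_window[OF that, of f l] nth_window[OF that, of f 0] by simp
  have "map (\<lambda>j. f ((i + j) mod l)) [0..<r] = window r f i" if "i < l" for i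
  proof (intro nth_equalityI)
    fix j assume "j < length (map (\<lambda>j. f ((i + j) mod l)) [0..<r])"
    then have j: "j < r" by simp
    show "map (\<lambda>j. f ((i + j) mod l)) [0..<r] ! j = window r f i ! j"
    proof (cases "i + j < l")
      case False
      with j that assms have "(i + j) mod l = i + j - l" and "i + j - l < r"
        by (simp_all add: mod_if)
      then show ?thesis using j periodic[of "i + j - l"] False by simp
    qed (use j in simp)
  qed simp
  then have "cycle_hom r E l f"
    using f(1) by (simp add: cycle_hom_def oedges_def)
  then show "\<exists>phi. cycle_hom r E l phi" by blast
qed

lemma not_hom_free_iff:
  assumes r: "0 < r"
  shows "\<not> hom_free r k E \<longleftrightarrow>
    (\<exists>zs\<in>oedges r E. (adjacent r E)\<^sup>*\<^sup>* (tuple_act r (cyc r ^^ k) zs) zs)"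
proof
  assume "\<not> hom_free r k E"
  then obtain l phi where l: "r < l" "l mod r = k mod r" and "cycle_hom r E l phi"
    by (auto simp: hom_free_def)
  then obtain xs where walk: "tight_walk r E l xs xs"
    using ex_cycle_hom_iff_closed_tight_walk by blast
  then have xs: "xs \<in> oedges r E" by (auto simp: tight_walk_def)
  then have "rotate l xs = rotate k xs"
    using l(2) by (simp only: rotate_conv_mod[of l xs] rotate_conv_mod[of k xs] oedges_length)
  then have "(adjacent r E)\<^sup>*\<^sup>* xs (rotate k xs)"
    using tight_walk_imp_rtranclp[OF r walk] by simp
  moreover have "tuple_act r (cyc r ^^ k) (rotate k xs) = xs"
    using tuple_act_cyc_pow_rotate[OF r oedges_length[OF xs]] .
  ultimately show "\<exists>zs\<in>oedges r E. (adjacent r E)\<^sup>*\<^sup>* (tuple_act r (cyc r ^^ k) zs) zs"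
    using xs by (metis rotate_in_oedges)
next
  assume "\<exists>zs\<in>oedges r E. (adjacent r E)\<^sup>*\<^sup>* (tuple_act r (cyc r ^^ k) zs) zs"
  then obtain zs where zs: "zs \<in> oedges r E"
    and fixed: "(adjacent r E)\<^sup>*\<^sup>* (tuple_act r (cyc r ^^ k) zs) zs" ..
  have "(adjacent r E)\<^sup>*\<^sup>* zs (tuple_act r (cyc r ^^ k) zs)"
    by (rule rtranclp_adjacent_sym[OF fixed])
  then obtain q where "tight_walk r E (q * r) zs (tuple_act r (cyc r ^^ k) zs)"
    using rtranclp_imp_tight_walk zs by blast
  \<comment> \<open>Close the walk by rotating back, padding with two full turns so that it
      is longer than r.\<close>
  moreover have "tight_walk r E k (tuple_act r (cyc r ^^ k) zs) zs"
    using tight_walk_rotate[OF tuple_act_in_oedges[OF cyc_pow_in_carrier[OF r, of k] zs], of k]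
    by (simp add: rotate_tuple_act_cyc_pow[OF r oedges_length[OF zs]])
  moreover have "tight_walk r E (2 * r) zs zs"
    using tight_walk_rotate[OF zs, of "2 * r"] by (simp add: oedges_length[OF zs])
  ultimately have "tight_walk r E (q * r + k + 2 * r) zs zs"
    by (blast intro: tight_walk_trans)
  moreover have "r < q * r + k + 2 * r" and "(q * r + k + 2 * r) mod r = k mod r"
    using r by simp_all
  ultimately show "\<not> hom_free r k E"
    unfolding hom_free_def using ex_cycle_hom_iff_closed_tight_walk by blast
qed

section \<open>Cosets and class stabilizers\<close>

lemma (in group) lcos_eq_if_inv_mult_mem:
  assumes "subgroup H G" and "x \<in> carrier G" and "y \<in> carrier G" and "inv x \<otimes> y \<in> H"
  shows "x <#\<^bsub>G\<^esub> H = y <#\<^bsub>G\<^esub> H"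
  using l_repr_independence[OF subgroup.lcos_module_rev[OF assms(1) is_group assms(2-4)] assms(2,1)] .

lemma (in group) inv_mult_mem_if_lcos_eq:
  assumes H: "subgroup H G" and x: "x \<in> carrier G" and y: "y \<in> carrier G"
    and "x <#\<^bsub>G\<^esub> H = y <#\<^bsub>G\<^esub> H"
  shows "inv x \<otimes> y \<in> H"
proof -
  have "y \<in> y <#\<^bsub>G\<^esub> H"
    using subgroup.lcos_module_rev[OF H is_group y y] subgroup.one_closed[OF H] y by simp
  then obtain h where "h \<in> H" "y = x \<otimes> h"
    using assms(4) by (auto simp: l_coset_def)
  then show ?thesis
    using x subgroup.mem_carrier[OF H] by (simp add: m_assoc[symmetric])
qed

lemma (in group) lcos_mult_eq_if_mem_conj:
  assumes H: "subgroup H G" and g: "g \<in> carrier G"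
    and s: "s \<in> carrier G" and t: "t \<in> carrier G"
    and "inv t \<otimes> s \<in> (g <#\<^bsub>G\<^esub> H) #> inv g"
  shows "(s \<otimes> g) <#\<^bsub>G\<^esub> H = (t \<otimes> g) <#\<^bsub>G\<^esub> H"
proof -
  obtain h where h: "h \<in> H" "inv t \<otimes> s = g \<otimes> h \<otimes> inv g"
    using assms(5) by (auto simp: l_coset_def r_coset_def)
  then have hG: "h \<in> carrier G" using subgroup.mem_carrier[OF H] by blast
  have "inv (t \<otimes> g) \<otimes> (s \<otimes> g) = inv g \<otimes> (inv t \<otimes> s) \<otimes> g"
    using g s t by (simp add: inv_mult_group m_assoc)
  also have "\<dots> = h"
    using g hG by (simp add: h(2) m_assoc[symmetric]) (simp add: m_assoc)
  finally have "inv (t \<otimes> g) \<otimes> (s \<otimes> g) \<in> H" using h(1) by simp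
  then show ?thesis
    using lcos_eq_if_inv_mult_mem[OF H] g s t by (metis m_closed)
qed

lemma (in group) conj_mem_if_lcos_fixed:
  assumes H: "subgroup H G" and g: "g \<in> carrier G" and p: "p \<in> carrier G"
    and "p <#\<^bsub>G\<^esub> (g <#\<^bsub>G\<^esub> H) = g <#\<^bsub>G\<^esub> H"
  shows "inv g \<otimes> p \<otimes> g \<in> H"
proof -
  have "g <#\<^bsub>G\<^esub> H = (p \<otimes> g) <#\<^bsub>G\<^esub> H"
    using assms(4) lcos_m_assoc[OF subgroup.subset[OF H] p g] by simp
  then show ?thesis
    using inv_mult_mem_if_lcos_eq[OF H g] g p by (simp add: m_assoc)
qed

definition stabilizer :: "nat \<Rightarrow> 'a set set \<Rightarrow> 'a list \<Rightarrow> perm set" where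
  "stabilizer r E xs = {s \<in> carrier (sym_group r). (adjacent r E)\<^sup>*\<^sup>* (tuple_act r s xs) xs}"

lemma inv_mult_mem_stabilizer:
  assumes xs: "xs \<in> oedges r E"
    and s: "s \<in> carrier (sym_group r)" and t: "t \<in> carrier (sym_group r)"
    and "(adjacent r E)\<^sup>*\<^sup>* (tuple_act r s xs) ys" and "(adjacent r E)\<^sup>*\<^sup>* (tuple_act r t xs) ys"
  shows "inv\<^bsub>sym_group r\<^esub> t \<otimes>\<^bsub>sym_group r\<^esub> s \<in> stabilizer r E xs"
proof -
  interpret S: group "sym_group r" by (rule sym_group_is_group)
  have "(adjacent r E)\<^sup>*\<^sup>* (tuple_act r s xs) (tuple_act r t xs)"
    using assms(4,5) by (blast intro: rtranclp_trans rtranclp_adjacent_sym)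
  then have "(adjacent r E)\<^sup>*\<^sup>* (tuple_act r (inv\<^bsub>sym_group r\<^esub> t) (tuple_act r s xs)) xs"
    using tuple_act_rtranclp_adjacent[OF S.inv_closed[OF t]]
      tuple_act_inv_cancel[OF t oedges_length[OF xs]] by metis
  then show ?thesis
    using s t by (simp add: stabilizer_def tuple_act_mult del: sym_group_inv_equality)
qed

lemma subgroup_stabilizer:
  assumes xs: "xs \<in> oedges r E"
  shows "subgroup (stabilizer r E xs) (sym_group r)"
proof (rule group.subgroupI[OF sym_group_is_group])
  interpret S: group "sym_group r" by (rule sym_group_is_group)
  show "stabilizer r E xs \<subseteq> carrier (sym_group r)" by (auto simp: stabilizer_def)
  have one: "\<one>\<^bsub>sym_group r\<^esub> \<in> stabilizer r E xs"
    using tuple_act_one[OF oedges_length[OF xs]] by (simp add: stabilizer_def)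
  then show "stabilizer r E xs \<noteq> {}" by blast
  fix a b assume a: "a \<in> stabilizer r E xs" and b: "b \<in> stabilizer r E xs"
  then have "inv\<^bsub>sym_group r\<^esub> a \<otimes>\<^bsub>sym_group r\<^esub> \<one>\<^bsub>sym_group r\<^esub> \<in> stabilizer r E xs"
    using inv_mult_mem_stabilizer[OF xs, of "\<one>\<^bsub>sym_group r\<^esub>" a xs] one
    by (simp add: stabilizer_def del: sym_group_inv_equality)
  then show "inv\<^bsub>sym_group r\<^esub> a \<in> stabilizer r E xs"
    using a by (simp add: stabilizer_def del: sym_group_inv_equality)
  have "(adjacent r E)\<^sup>*\<^sup>* (tuple_act r a (tuple_act r b xs)) (tuple_act r a xs)"
    using a b by (simp add: stabilizer_def tuple_act_rtranclp_adjacent)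
  then show "a \<otimes>\<^bsub>sym_group r\<^esub> b \<in> stabilizer r E xs"
    using a b by (auto simp: stabilizer_def tuple_act_mult intro: rtranclp_trans)
qed

lemma stabilizer_avoids_if_hom_free:
  assumes "hom_free r k E" and r: "0 < r" and xs: "xs \<in> oedges r E"
  shows "avoids r (cyc r ^^ k) (stabilizer r E xs)"
  unfolding avoids_def
proof (intro ballI notI)
  interpret S: group "sym_group r" by (rule sym_group_is_group)
  let ?S = "sym_group r" and ?p = "cyc r ^^ k"
  fix g assume g: "g \<in> carrier ?S"
    and "g \<otimes>\<^bsub>?S\<^esub> ?p \<otimes>\<^bsub>?S\<^esub> inv\<^bsub>?S\<^esub> g \<in> stabilizer r E xs"
  then have "(adjacent r E)\<^sup>*\<^sup>* (tuple_act r (g \<otimes>\<^bsub>?S\<^esub> ?p \<otimes>\<^bsub>?S\<^esub> inv\<^bsub>?S\<^esub> g) xs) xs"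
    by (simp add: stabilizer_def del: sym_group_inv_equality)
  \<comment> \<open>If g ?p g\<inverse> fixes the class of xs, then ?p fixes the class of g\<inverse> xs.\<close>
  then have "(adjacent r E)\<^sup>*\<^sup>* (tuple_act r (inv\<^bsub>?S\<^esub> g)
      (tuple_act r (g \<otimes>\<^bsub>?S\<^esub> ?p \<otimes>\<^bsub>?S\<^esub> inv\<^bsub>?S\<^esub> g) xs)) (tuple_act r (inv\<^bsub>?S\<^esub> g) xs)"
    by (rule tuple_act_rtranclp_adjacent[OF S.inv_closed[OF g]])
  moreover have "inv\<^bsub>?S\<^esub> g \<otimes>\<^bsub>?S\<^esub> (g \<otimes>\<^bsub>?S\<^esub> ?p \<otimes>\<^bsub>?S\<^esub> inv\<^bsub>?S\<^esub> g) = ?p \<otimes>\<^bsub>?S\<^esub> inv\<^bsub>?S\<^esub> g"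
    using g cyc_pow_in_carrier[OF r] by (simp add: S.m_assoc[symmetric] del: sym_group_inv_equality)
  ultimately have "(adjacent r E)\<^sup>*\<^sup>*
      (tuple_act r ?p (tuple_act r (inv\<^bsub>?S\<^esub> g) xs)) (tuple_act r (inv\<^bsub>?S\<^esub> g) xs)"
    using g cyc_pow_in_carrier[OF r] by (simp add: tuple_act_mult del: sym_group_inv_equality)
  moreover have "tuple_act r (inv\<^bsub>?S\<^esub> g) xs \<in> oedges r E"
    using tuple_act_in_oedges[OF S.inv_closed[OF g] xs] .
  ultimately show False
    using assms(1) not_hom_free_iff[OF r] by blast
qed

lemma ex_max_avoiding_supergroup:
  assumes "subgroup K (sym_group r)" and "avoids r p K"
  shows "\<exists>H. max_avoiding r p H \<and> K \<subseteq> H"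
proof -
  define C where "C = {H. subgroup H (sym_group r) \<and> avoids r p H \<and> K \<subseteq> H}"
  have "C \<subseteq> Pow (carrier (sym_group r))"
    by (auto simp: C_def dest: subgroup.subset)
  then have "finite C"
    by (rule finite_subset) (simp add: sym_group_def finite_permutations)
  moreover have "K \<in> C" using assms by (simp add: C_def)
  ultimately obtain H where "H \<in> C" "K \<subseteq> H" "\<forall>H'\<in>C. H \<subseteq> H' \<longrightarrow> H = H'"
    using finite_has_maximal2 by blast
  then show ?thesis by (intro exI[of _ H]) (auto simp: C_def max_avoiding_def)
qed

section \<open>Accordant colorings\<close>

definition class_orbit :: "nat \<Rightarrow> 'a set set \<Rightarrow> 'a list \<Rightarrow> 'a list set" where
  "class_orbit r E ys = {xs \<in> oedges r E.
     \<exists>s\<in>carrier (sym_group r). (adjacent r E)\<^sup>*\<^sup>* (tuple_act r s xs) ys}"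

lemma class_orbit_subset:
  assumes t: "t \<in> carrier (sym_group r)" and "(adjacent r E)\<^sup>*\<^sup>* (tuple_act r t ys) ys'"
  shows "class_orbit r E ys \<subseteq> class_orbit r E ys'"
proof
  fix xs assume "xs \<in> class_orbit r E ys"
  then obtain s where xs: "xs \<in> oedges r E" and s: "s \<in> carrier (sym_group r)"
    and "(adjacent r E)\<^sup>*\<^sup>* (tuple_act r s xs) ys"
    by (auto simp: class_orbit_def)
  then have "(adjacent r E)\<^sup>*\<^sup>* (tuple_act r (t \<otimes>\<^bsub>sym_group r\<^esub> s) xs) (tuple_act r t ys)"
    using tuple_act_rtranclp_adjacent[OF t] by (simp add: tuple_act_mult[OF t s, symmetric])
  then have "(adjacent r E)\<^sup>*\<^sup>* (tuple_act r (t \<otimes>\<^bsub>sym_group r\<^esub> s) xs) ys'"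
    using assms(2) by (rule rtranclp_trans)
  moreover have "t \<otimes>\<^bsub>sym_group r\<^esub> s \<in> carrier (sym_group r)"
    using t s group.subgroup_self[OF sym_group_is_group] by (simp add: subgroup.m_closed)
  ultimately show "xs \<in> class_orbit r E ys'"
    using xs by (auto simp: class_orbit_def)
qed

lemma class_orbit_eq:
  assumes ys: "ys \<in> oedges r E" and t: "t \<in> carrier (sym_group r)"
    and "(adjacent r E)\<^sup>*\<^sup>* (tuple_act r t ys) ys'"
  shows "class_orbit r E ys' = class_orbit r E ys"
proof
  show "class_orbit r E ys \<subseteq> class_orbit r E ys'"
    by (rule class_orbit_subset[OF t assms(3)])
  have "(adjacent r E)\<^sup>*\<^sup>* (tuple_act r (inv\<^bsub>sym_group r\<^esub> t) ys') ys"
    using tuple_act_rtranclp_adjacent[OF group.inv_closed[OF sym_group_is_group t]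
        rtranclp_adjacent_sym[OF assms(3)]]
    by (simp add: tuple_act_inv_cancel[OF t oedges_length[OF ys]] del: sym_group_inv_equality)
  then show "class_orbit r E ys' \<subseteq> class_orbit r E ys"
    by (rule class_orbit_subset[OF group.inv_closed[OF sym_group_is_group t]])
qed

lemma ex_orbit_representatives:
  obtains rep s where
    "\<And>ys. ys \<in> oedges r E \<Longrightarrow> rep ys \<in> oedges r E \<and> s ys \<in> carrier (sym_group r) \<and>
      (adjacent r E)\<^sup>*\<^sup>* (tuple_act r (s ys) (rep ys)) ys"
    and "\<And>ys ys' t. ys \<in> oedges r E \<Longrightarrow> t \<in> carrier (sym_group r) \<Longrightarrow>
      (adjacent r E)\<^sup>*\<^sup>* (tuple_act r t ys) ys' \<Longrightarrow> rep ys' = rep ys"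
proof -
  define rep where "rep ys = (SOME xs. xs \<in> class_orbit r E ys)" for ys
  define s where "s ys = (SOME t. t \<in> carrier (sym_group r) \<and>
      (adjacent r E)\<^sup>*\<^sup>* (tuple_act r t (rep ys)) ys)" for ys
  have "rep ys \<in> oedges r E \<and> s ys \<in> carrier (sym_group r) \<and>
      (adjacent r E)\<^sup>*\<^sup>* (tuple_act r (s ys) (rep ys)) ys" if ys: "ys \<in> oedges r E" for ys
  proof -
    have "(adjacent r E)\<^sup>*\<^sup>* (tuple_act r \<one>\<^bsub>sym_group r\<^esub> ys) ys"
      using tuple_act_one[OF oedges_length[OF ys]] by simp
    moreover have "\<one>\<^bsub>sym_group r\<^esub> \<in> carrier (sym_group r)"
      by (simp add: sym_group_carrier sym_group_one)
    ultimately have "ys \<in> class_orbit r E ys"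
      using ys unfolding class_orbit_def by blast
    then have "rep ys \<in> class_orbit r E ys"
      unfolding rep_def by (rule someI)
    then have "rep ys \<in> oedges r E" and
      "\<exists>t. t \<in> carrier (sym_group r) \<and> (adjacent r E)\<^sup>*\<^sup>* (tuple_act r t (rep ys)) ys"
      by (auto simp: class_orbit_def)
    from this(1) someI_ex[OF this(2)] show ?thesis
      unfolding s_def by blast
  qed
  moreover have "rep ys' = rep ys"
    if "ys \<in> oedges r E" "t \<in> carrier (sym_group r)" "(adjacent r E)\<^sup>*\<^sup>* (tuple_act r t ys) ys'"
    for ys ys' t
    using class_orbit_eq[OF that] by (simp add: rep_def)
  ultimately show thesis by (rule that)
qed

locale orbit_coloring =
  fixes r :: nat and E :: "'a set set" and R :: "perm set set"
    and G :: "'a list \<Rightarrow> perm set" and g :: "'a list \<Rightarrow> perm"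
    and rep :: "'a list \<Rightarrow> 'a list" and s :: "'a list \<Rightarrow> perm"
  assumes subgroups: "\<And>H. H \<in> R \<Longrightarrow> subgroup H (sym_group r)"
    and stabilizer_conj: "\<And>xs. xs \<in> oedges r E \<Longrightarrow> G xs \<in> R \<and> g xs \<in> carrier (sym_group r) \<and>
      stabilizer r E xs \<subseteq> (g xs <#\<^bsub>sym_group r\<^esub> G xs) #>\<^bsub>sym_group r\<^esub> inv\<^bsub>sym_group r\<^esub> g xs"
    and rep: "\<And>ys. ys \<in> oedges r E \<Longrightarrow> rep ys \<in> oedges r E \<and> s ys \<in> carrier (sym_group r) \<and>
      (adjacent r E)\<^sup>*\<^sup>* (tuple_act r (s ys) (rep ys)) ys"
    and rep_eq: "\<And>ys ys' t. ys \<in> oedges r E \<Longrightarrow> t \<in> carrier (sym_group r) \<Longrightarrow>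
      (adjacent r E)\<^sup>*\<^sup>* (tuple_act r t ys) ys' \<Longrightarrow> rep ys' = rep ys"

sublocale orbit_coloring \<subseteq> S: group "sym_group r"
  by (rule sym_group_is_group)

context orbit_coloring
begin

definition chi :: "'a list \<Rightarrow> perm set \<times> perm set" where
  "chi ys = (G (rep ys), (s ys \<otimes>\<^bsub>sym_group r\<^esub> g (rep ys)) <#\<^bsub>sym_group r\<^esub> G (rep ys))"

lemma coset_eq:
  assumes xs: "xs \<in> oedges r E"
    and u: "u \<in> carrier (sym_group r)" and v: "v \<in> carrier (sym_group r)"
    and "(adjacent r E)\<^sup>*\<^sup>* (tuple_act r u xs) ys" and "(adjacent r E)\<^sup>*\<^sup>* (tuple_act r v xs) ys"
  shows "(u \<otimes>\<^bsub>sym_group r\<^esub> g xs) <#\<^bsub>sym_group r\<^esub> G xs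
    = (v \<otimes>\<^bsub>sym_group r\<^esub> g xs) <#\<^bsub>sym_group r\<^esub> G xs"
proof -
  have "inv\<^bsub>sym_group r\<^esub> v \<otimes>\<^bsub>sym_group r\<^esub> u \<in> stabilizer r E xs"
    by (rule inv_mult_mem_stabilizer[OF assms])
  then have "inv\<^bsub>sym_group r\<^esub> v \<otimes>\<^bsub>sym_group r\<^esub> u
      \<in> (g xs <#\<^bsub>sym_group r\<^esub> G xs) #>\<^bsub>sym_group r\<^esub> inv\<^bsub>sym_group r\<^esub> g xs"
    using stabilizer_conj[OF xs] by blast
  then show ?thesis
    using S.lcos_mult_eq_if_mem_conj[OF subgroups _ u v] stabilizer_conj[OF xs] by blast
qed

lemma chi_in_A_set:
  assumes "ys \<in> oedges r E" shows "chi ys \<in> A_set r R"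
proof -
  have x: "rep ys \<in> oedges r E" and "s ys \<in> carrier (sym_group r)"
    using rep[OF assms] by auto
  then have "s ys \<otimes>\<^bsub>sym_group r\<^esub> g (rep ys) \<in> carrier (sym_group r)"
    using stabilizer_conj[OF x] by simp
  then show ?thesis
    using stabilizer_conj[OF x] unfolding chi_def A_set_def by blast
qed

lemma chi_tuple_act:
  assumes q: "q \<in> carrier (sym_group r)" and ys: "ys \<in> oedges r E"
  shows "chi (tuple_act r q ys) = A_act r q (chi ys)"
proof -
  let ?x = "rep ys" and ?qys = "tuple_act r q ys"
  have qys: "?qys \<in> oedges r E" by (rule tuple_act_in_oedges[OF q ys])
  have rep_q: "rep ?qys = ?x" using rep_eq[OF ys q] by simp
  have x: "?x \<in> oedges r E" and sy: "s ys \<in> carrier (sym_group r)"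
    and sx: "(adjacent r E)\<^sup>*\<^sup>* (tuple_act r (s ys) ?x) ys"
    using rep[OF ys] by auto
  have q_sx: "(adjacent r E)\<^sup>*\<^sup>* (tuple_act r (q \<otimes>\<^bsub>sym_group r\<^esub> s ys) ?x) ?qys"
    unfolding tuple_act_mult[OF q sy, symmetric] by (rule tuple_act_rtranclp_adjacent[OF q sx])
  have "s ?qys \<in> carrier (sym_group r)" and "(adjacent r E)\<^sup>*\<^sup>* (tuple_act r (s ?qys) ?x) ?qys"
    using rep[OF qys] by (simp_all add: rep_q)
  then have "(s ?qys \<otimes>\<^bsub>sym_group r\<^esub> g ?x) <#\<^bsub>sym_group r\<^esub> G ?x
      = ((q \<otimes>\<^bsub>sym_group r\<^esub> s ys) \<otimes>\<^bsub>sym_group r\<^esub> g ?x) <#\<^bsub>sym_group r\<^esub> G ?x"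
    using coset_eq[OF x _ S.m_closed[OF q sy] _ q_sx] by blast
  also have "\<dots> = q <#\<^bsub>sym_group r\<^esub> ((s ys \<otimes>\<^bsub>sym_group r\<^esub> g ?x) <#\<^bsub>sym_group r\<^esub> G ?x)"
    using stabilizer_conj[OF x] sy q subgroup.subset[OF subgroups]
    by (simp only: S.m_assoc S.lcos_m_assoc S.m_closed)
  finally show ?thesis
    unfolding chi_def A_act_def rep_q by simp
qed

lemma chi_adjacent:
  assumes adj: "adjacent r E ys ys'" shows "chi ys = chi ys'"
proof -
  have ys: "ys \<in> oedges r E" and ys': "ys' \<in> oedges r E"
    using adj by (simp_all add: adjacent_def)
  have x: "rep ys \<in> oedges r E" and sy: "s ys \<in> carrier (sym_group r)"
    and sx: "(adjacent r E)\<^sup>*\<^sup>* (tuple_act r (s ys) (rep ys)) ys"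
    using rep[OF ys] by auto
  have sy': "(adjacent r E)\<^sup>*\<^sup>* (tuple_act r (s ys) (rep ys)) ys'"
    by (rule rtranclp.rtrancl_into_rtrancl[OF sx adj])
  have "(adjacent r E)\<^sup>*\<^sup>* (tuple_act r \<one>\<^bsub>sym_group r\<^esub> ys) ys'"
    using adj tuple_act_one[OF oedges_length[OF ys]] by simp
  then have rep': "rep ys' = rep ys"
    by (rule rep_eq[OF ys S.one_closed])
  have "s ys' \<in> carrier (sym_group r)"
    and "(adjacent r E)\<^sup>*\<^sup>* (tuple_act r (s ys') (rep ys)) ys'"
    using rep[OF ys'] by (simp_all add: rep')
  from coset_eq[OF x sy this(1) sy' this(2)] show ?thesis
    by (simp add: chi_def rep')
qed

lemma accordant_A_coloring_chi: "A_coloring r R E chi \<and> accordant r E chi"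
  using chi_in_A_set chi_tuple_act chi_adjacent
  unfolding A_coloring_def accordant_def adjacent_def by blast

end

lemma accordant_coloring_exists:
  assumes subgroups: "\<And>H. H \<in> R \<Longrightarrow> subgroup H (sym_group r)"
    and conj: "\<And>xs. xs \<in> oedges r E \<Longrightarrow> \<exists>H\<in>R. \<exists>h\<in>carrier (sym_group r).
      stabilizer r E xs \<subseteq> (h <#\<^bsub>sym_group r\<^esub> H) #>\<^bsub>sym_group r\<^esub> inv\<^bsub>sym_group r\<^esub> h"
  shows "\<exists>chi. A_coloring r R E chi \<and> accordant r E chi"
proof -
  define contains where "contains = (\<lambda>xs H h. h \<in> carrier (sym_group r) \<and>
      stabilizer r E xs \<subseteq> (h <#\<^bsub>sym_group r\<^esub> H) #>\<^bsub>sym_group r\<^esub> inv\<^bsub>sym_group r\<^esub> h)"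
  define G where "G xs = (SOME H. H \<in> R \<and> (\<exists>h. contains xs H h))" for xs
  define g where "g xs = (SOME h. contains xs (G xs) h)" for xs
  have Gg: "G xs \<in> R \<and> contains xs (G xs) (g xs)" if "xs \<in> oedges r E" for xs
  proof -
    have "\<exists>H. H \<in> R \<and> (\<exists>h. contains xs H h)"
      using conj[OF that] unfolding contains_def by blast
    from someI_ex[OF this] have G: "G xs \<in> R \<and> (\<exists>h. contains xs (G xs) h)"
      unfolding G_def .
    then have "\<exists>h. contains xs (G xs) h" by blast
    from someI_ex[OF this] G show ?thesis
      unfolding g_def by blast
  qed
  have "orbit_coloring r E R G g rep s"
    if "\<And>ys. ys \<in> oedges r E \<Longrightarrow> rep ys \<in> oedges r E \<and> s ys \<in> carrier (sym_group r) \<and>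
        (adjacent r E)\<^sup>*\<^sup>* (tuple_act r (s ys) (rep ys)) ys"
      and "\<And>ys ys' t. ys \<in> oedges r E \<Longrightarrow> t \<in> carrier (sym_group r) \<Longrightarrow>
        (adjacent r E)\<^sup>*\<^sup>* (tuple_act r t ys) ys' \<Longrightarrow> rep ys' = rep ys"
    for rep s
  proof (rule orbit_coloring.intro)
    show "\<And>xs. xs \<in> oedges r E \<Longrightarrow> G xs \<in> R \<and> g xs \<in> carrier (sym_group r) \<and>
      stabilizer r E xs \<subseteq> (g xs <#\<^bsub>sym_group r\<^esub> G xs) #>\<^bsub>sym_group r\<^esub> inv\<^bsub>sym_group r\<^esub> g xs"
      using Gg unfolding contains_def by blast
  qed (use subgroups that in blast)+
  then show ?thesis
    using orbit_coloring.accordant_A_coloring_chi by (metis ex_orbit_representatives)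
qed

lemma accordant_rtranclp_eq:
  assumes "accordant r E chi" and "(adjacent r E)\<^sup>*\<^sup>* xs ys"
  shows "chi xs = chi ys"
  using assms(2) by induction (use assms(1) in \<open>auto simp: accordant_def adjacent_def\<close>)

lemma accordant_coloring_imp_not_fixed:
  assumes "A_coloring r R E chi" and "accordant r E chi"
    and subgroups: "\<And>G. G \<in> R \<Longrightarrow> subgroup G (sym_group r)"
    and avoiding: "\<And>G. G \<in> R \<Longrightarrow> avoids r p G"
    and p: "p \<in> carrier (sym_group r)" and zs: "zs \<in> oedges r E"
  shows "\<not> (adjacent r E)\<^sup>*\<^sup>* (tuple_act r p zs) zs"
proof
  interpret S: group "sym_group r" by (rule sym_group_is_group)
  assume "(adjacent r E)\<^sup>*\<^sup>* (tuple_act r p zs) zs"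
  then have "chi zs = chi (tuple_act r p zs)"
    using accordant_rtranclp_eq[OF assms(2)] by metis
  also have "\<dots> = A_act r p (chi zs)"
    using assms(1) p zs by (simp add: A_coloring_def)
  finally have "chi zs = A_act r p (chi zs)" .
  moreover obtain G g where G: "G \<in> R" and g: "g \<in> carrier (sym_group r)"
    and "chi zs = (G, g <#\<^bsub>sym_group r\<^esub> G)"
    using assms(1) zs by (auto simp: A_coloring_def A_set_def)
  ultimately have "p <#\<^bsub>sym_group r\<^esub> (g <#\<^bsub>sym_group r\<^esub> G) = g <#\<^bsub>sym_group r\<^esub> G"
    by (simp add: A_act_def)
  then have "inv\<^bsub>sym_group r\<^esub> g \<otimes>\<^bsub>sym_group r\<^esub> p \<otimes>\<^bsub>sym_group r\<^esub> g \<in> G"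
    using S.conj_mem_if_lcos_fixed[OF subgroups[OF G] g p] by blast
  moreover have "inv\<^bsub>sym_group r\<^esub> g \<otimes>\<^bsub>sym_group r\<^esub> p \<otimes>\<^bsub>sym_group r\<^esub>
      inv\<^bsub>sym_group r\<^esub> (inv\<^bsub>sym_group r\<^esub> g) \<notin> G"
    using avoiding[OF G] S.inv_closed[OF g] by (simp add: avoids_def del: sym_group_inv_equality)
  ultimately show False
    using S.inv_inv[OF g] by (simp del: sym_group_inv_equality)
qed

theorem theorem3p4:
  fixes r k :: nat and E :: "'a set set" and R :: "perm set set"
  assumes "r \<ge> 2"
    and "finite E"
    and "\<forall>e \<in> E. card e = r"
    and "rep_system r (cyc r ^^ k) R"
  shows "hom_free r k E \<longleftrightarrow> (\<exists>chi. A_coloring r R E chi \<and> accordant r E chi)"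
proof -
  have r: "0 < r" using assms(1) by simp
  have subgroups: "\<And>G. G \<in> R \<Longrightarrow> subgroup G (sym_group r)"
    and avoiding: "\<And>G. G \<in> R \<Longrightarrow> avoids r (cyc r ^^ k) G"
    using assms(4) by (auto simp: rep_system_def max_avoiding_def)
  show ?thesis
  proof
    assume hom_free: "hom_free r k E"
    have conj: "\<exists>G\<in>R. \<exists>g\<in>carrier (sym_group r).
      stabilizer r E xs \<subseteq> (g <#\<^bsub>sym_group r\<^esub> G) #>\<^bsub>sym_group r\<^esub> inv\<^bsub>sym_group r\<^esub> g"
      if xs: "xs \<in> oedges r E" for xs
    proof -
      obtain H where "max_avoiding r (cyc r ^^ k) H" "stabilizer r E xs \<subseteq> H"
        using ex_max_avoiding_supergroup[OF subgroup_stabilizer[OF xs]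
            stabilizer_avoids_if_hom_free[OF hom_free r xs]] by blast
      with assms(4) show ?thesis
        by (fastforce simp: rep_system_def conj_subgroups_def)
    qed
    show "\<exists>chi. A_coloring r R E chi \<and> accordant r E chi"
      by (rule accordant_coloring_exists[OF subgroups conj])
  next
    assume "\<exists>chi. A_coloring r R E chi \<and> accordant r E chi"
    then obtain chi where "A_coloring r R E chi" "accordant r E chi" by blast
    from accordant_coloring_imp_not_fixed[OF this subgroups avoiding cyc_pow_in_carrier[OF r]]
    show "hom_free r k E"
      using not_hom_free_iff[OF r] by blast
  qed
qed

end
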